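(* Let $\phi$ be a quantum channel on $\mathcal M(d;\mathbb C)$, and let $\mathcal G_\phi$ be the (nonempty) set of limit points of the sequence $(\phi^n)_{n\in\mathbb N}$. Then either every element of $\mathcal G_\phi$ is entanglement-breaking, or no element of $\mathcal G_\phi$ is entanglement-breaking.
   Context: A quantum channel is a completely positive, trace-preserving linear map on $\mathcal M(d;\mathbb C)$; $\phi^n$ is its $n$-fold composition. A channel $\psi$ is entanglement-breaking if $(\psi\otimes I)(\rho)$ is separable for every bipartite state $\rho$. *)

theory Defs
  imports Complex_Main "Jordan_Normal_Form.Matrix"
begin

text \<open>Complex d x d matrices are elements of carrier_mat d d (type complex mat).
Composite index convention for C^d (x) C^m: (i,a) corresponds to i*m + a.\<close>

definition mtrace :: "complex mat \<Rightarrow> complex" where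
  "mtrace A = (\<Sum>i<dim_row A. A $$ (i,i))"

definition psd :: "nat \<Rightarrow> complex mat \<Rightarrow> bool" where
  "psd n A \<longleftrightarrow> A \<in> carrier_mat n n \<and>
     (\<forall>v \<in> carrier_vec n. let q = (\<Sum>i<n. cnj (v $ i) * (A *\<^sub>v v) $ i) in Im q = 0 \<and> Re q \<ge> 0)"

definition is_state :: "nat \<Rightarrow> complex mat \<Rightarrow> bool" where
  "is_state n A \<longleftrightarrow> psd n A \<and> mtrace A = 1"

definition blk :: "nat \<Rightarrow> nat \<Rightarrow> complex mat \<Rightarrow> nat \<Rightarrow> nat \<Rightarrow> complex mat" where
  "blk d m \<rho> a b = mat d d (\<lambda>(i,j). \<rho> $$ (i*m + a, j*m + b))"

definition tensor_id :: "nat \<Rightarrow> nat \<Rightarrow> (complex mat \<Rightarrow> complex mat) \<Rightarrow> complex mat \<Rightarrow> complex mat" where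
  "tensor_id d m \<psi> \<rho> = mat (d*m) (d*m)
     (\<lambda>(p,q). \<psi> (blk d m \<rho> (p mod m) (q mod m)) $$ (p div m, q div m))"

definition linear_on_mat :: "nat \<Rightarrow> (complex mat \<Rightarrow> complex mat) \<Rightarrow> bool" where
  "linear_on_mat d \<psi> \<longleftrightarrow>
     (\<forall>A \<in> carrier_mat d d. \<psi> A \<in> carrier_mat d d) \<and>
     (\<forall>A \<in> carrier_mat d d. \<forall>B \<in> carrier_mat d d. \<psi> (A + B) = \<psi> A + \<psi> B) \<and>
     (\<forall>A \<in> carrier_mat d d. \<forall>c. \<psi> (c \<cdot>\<^sub>m A) = c \<cdot>\<^sub>m \<psi> A)"

definition completely_positive :: "nat \<Rightarrow> (complex mat \<Rightarrow> complex mat) \<Rightarrow> bool" where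
  "completely_positive d \<psi> \<longleftrightarrow>
     (\<forall>m. \<forall>\<rho>. psd (d*m) \<rho> \<longrightarrow> psd (d*m) (tensor_id d m \<psi> \<rho>))"

definition trace_preserving :: "nat \<Rightarrow> (complex mat \<Rightarrow> complex mat) \<Rightarrow> bool" where
  "trace_preserving d \<psi> \<longleftrightarrow> (\<forall>A \<in> carrier_mat d d. mtrace (\<psi> A) = mtrace A)"

definition quantum_channel :: "nat \<Rightarrow> (complex mat \<Rightarrow> complex mat) \<Rightarrow> bool" where
  "quantum_channel d \<psi> \<longleftrightarrow> linear_on_mat d \<psi> \<and> completely_positive d \<psi> \<and> trace_preserving d \<psi>"

definition separable :: "nat \<Rightarrow> nat \<Rightarrow> complex mat \<Rightarrow> bool" where
  "separable d m \<sigma> \<longleftrightarrow> \<sigma> \<in> carrier_mat (d*m) (d*m) \<and>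
     (\<exists>K (p :: nat \<Rightarrow> real) A B.
        (\<forall>k<K. p k \<ge> 0 \<and> is_state d (A k) \<and> is_state m (B k)) \<and>
        (\<Sum>k<K. p k) = 1 \<and>
        (\<forall>i<d*m. \<forall>j<d*m. \<sigma> $$ (i,j) =
            (\<Sum>k<K. complex_of_real (p k) * (A k $$ (i div m, j div m)) * (B k $$ (i mod m, j mod m)))))"

definition entanglement_breaking :: "nat \<Rightarrow> (complex mat \<Rightarrow> complex mat) \<Rightarrow> bool" where
  "entanglement_breaking d \<psi> \<longleftrightarrow>
     (\<forall>m. \<forall>\<rho>. is_state (d*m) \<rho> \<longrightarrow> separable d m (tensor_id d m \<psi> \<rho>))"

text \<open>psi is a limit point (subsequential limit) of (phi^n)_n, in the (entrywise, equivalently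
any norm) topology on linear maps of M(d;C).\<close>
definition limit_point_of_powers :: "nat \<Rightarrow> (complex mat \<Rightarrow> complex mat) \<Rightarrow> (complex mat \<Rightarrow> complex mat) \<Rightarrow> bool" where
  "limit_point_of_powers d \<phi> \<psi> \<longleftrightarrow>
     (\<forall>A \<in> carrier_mat d d. \<psi> A \<in> carrier_mat d d) \<and>
     (\<exists>r. strict_mono r \<and>
        (\<forall>A \<in> carrier_mat d d. \<forall>i<d. \<forall>j<d.
           (\<lambda>k. ((\<phi> ^^ r k) A) $$ (i,j)) \<longlonglongrightarrow> \<psi> A $$ (i,j)))"

end

theory Submission
  imports Defs "HOL-Analysis.Elementary_Metric_Spaces"
begin

text \<open>Let \<open>\<psi> = lim \<phi>^r\<^sub>k\<close> and \<open>\<psi>' = lim \<phi>^s\<^sub>k\<close> be two limit points. The maps \<open>\<phi>^(s(r\<^sub>k + k) - r\<^sub>k)\<close> are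
positive and trace preserving, so their entries are uniformly bounded and a subsequence converges
to a linear map \<open>\<chi>\<close> sending states to states; then \<open>\<psi>' = \<chi> \<circ> \<psi>\<close>. Post-composing an
entanglement-breaking map with such a \<open>\<chi>\<close> keeps it entanglement-breaking, because \<open>\<chi>\<close> turns every
product term of a separable decomposition into a product term. So one entanglement-breaking limit
point makes all of them entanglement-breaking.\<close>

definition qform :: "nat \<Rightarrow> complex mat \<Rightarrow> complex vec \<Rightarrow> complex" where
  "qform n A v = (\<Sum>i<n. cnj (v $ i) * (A *\<^sub>v v) $ i)"

lemma psd_iff_qform:
  "psd n A \<longleftrightarrow> A \<in> carrier_mat n n \<and>
     (\<forall>v\<in>carrier_vec n. Im (qform n A v) = 0 \<and> Re (qform n A v) \<ge> 0)"
  unfolding psd_def qform_def Let_def by simp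

lemma psd_carrier: "psd n A \<Longrightarrow> A \<in> carrier_mat n n"
  unfolding psd_def by auto

lemma qform_eq_double_sum:
  assumes "A \<in> carrier_mat n n" "v \<in> carrier_vec n"
  shows "qform n A v = (\<Sum>k<n. \<Sum>l<n. cnj (v $ k) * A $$ (k,l) * v $ l)"
  unfolding qform_def using assms
  by (auto simp: scalar_prod_def sum_distrib_left mult.assoc atLeast0LessThan intro!: sum.cong)

lemma psd_diag_nonneg:
  assumes "psd n Y" "k < n"
  shows "Im (Y $$ (k,k)) = 0 \<and> Re (Y $$ (k,k)) \<ge> 0"
proof -
  define v where "v = vec n (\<lambda>l. if l = k then 1 else (0::complex))"
  have v: "v \<in> carrier_vec n" unfolding v_def by simp
  have Y: "Y \<in> carrier_mat n n" using assms psd_carrier by auto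
  have "qform n Y v = (\<Sum>a<n. \<Sum>b<n. cnj (v $ a) * Y $$ (a,b) * v $ b)"
    by (rule qform_eq_double_sum[OF Y v])
  also have "\<dots> = (\<Sum>a<n. if a = k then Y $$ (k,k) else 0)"
  proof (intro sum.cong refl)
    fix a assume a: "a \<in> {..<n}"
    have "(\<Sum>b<n. cnj (v $ a) * Y $$ (a,b) * v $ b) = (\<Sum>b<n. if b = k then cnj (v $ a) * Y $$ (a,k) else 0)"
      unfolding v_def by (intro sum.cong) auto
    also have "\<dots> = cnj (v $ a) * Y $$ (a,k)" using assms(2) by simp
    finally show "(\<Sum>b<n. cnj (v $ a) * Y $$ (a,b) * v $ b) = (if a = k then Y $$ (k,k) else 0)"
      using a unfolding v_def by auto
  qed
  also have "\<dots> = Y $$ (k,k)" using assms(2) by simp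
  finally show ?thesis using assms v unfolding psd_iff_qform by metis
qed

lemma sum_mult_two_point:
  fixes f :: "nat \<Rightarrow> complex"
  assumes "i < n" "j < n" "i \<noteq> j"
  shows "(\<Sum>l<n. f l * ((if l = i then 1 else 0) + (if l = j then c else 0))) = f i + c * f j"
proof -
  have "(\<Sum>l<n. f l * ((if l = i then 1 else 0) + (if l = j then c else 0)))
      = (\<Sum>l<n. (if l = i then f i else 0) + (if l = j then c * f j else 0))"
    by (intro sum.cong) (use assms in auto)
  also have "\<dots> = f i + c * f j" using assms by (simp add: sum.distrib)
  finally show ?thesis .
qed

lemma qform_two_point:
  assumes Y: "Y \<in> carrier_mat n n" and ij: "i < n" "j < n" "i \<noteq> j"
  shows "qform n Y (vec n (\<lambda>l. (if l = i then 1 else 0) + (if l = j then c else 0)))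
     = Y $$ (i,i) + c * Y $$ (i,j) + cnj c * Y $$ (j,i) + cnj c * c * Y $$ (j,j)"
proof -
  let ?x = "\<lambda>l. (if l = i then 1 else 0) + (if l = j then c else (0::complex))"
  have "qform n Y (vec n ?x) = (\<Sum>k<n. cnj (?x k) * (\<Sum>l<n. Y $$ (k,l) * ?x l))"
    unfolding qform_eq_double_sum[OF Y vec_carrier]
    by (intro sum.cong refl) (auto simp: sum_distrib_left mult.assoc)
  also have "\<dots> = (\<Sum>k<n. (Y $$ (k,i) + c * Y $$ (k,j)) * ((if k = i then 1 else 0) + (if k = j then cnj c else 0)))"
    by (intro sum.cong) (auto simp: sum_mult_two_point[OF ij])
  also have "\<dots> = (Y $$ (i,i) + c * Y $$ (i,j)) + cnj c * (Y $$ (j,i) + c * Y $$ (j,j))"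
    by (rule sum_mult_two_point[OF ij])
  finally show ?thesis by (simp add: algebra_simps)
qed

lemma psd_offdiag_bound:
  assumes P: "psd n Y" and ij: "i < n" "j < n" "i \<noteq> j"
  shows "cmod (Y $$ (i,j)) \<le> Re (Y $$ (i,i)) + Re (Y $$ (j,j))"
proof -
  have Y: "Y \<in> carrier_mat n n" using P psd_carrier by auto
  have q: "Im (Y $$ (i,i) + c * Y $$ (i,j) + cnj c * Y $$ (j,i) + cnj c * c * Y $$ (j,j)) = 0 \<and>
           Re (Y $$ (i,i) + c * Y $$ (i,j) + cnj c * Y $$ (j,i) + cnj c * c * Y $$ (j,j)) \<ge> 0" for c
    using P vec_carrier unfolding psd_iff_qform qform_two_point[OF Y ij, symmetric] by blast
  have di: "Im (Y $$ (i,i)) = 0" and dj: "Im (Y $$ (j,j)) = 0"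
    using psd_diag_nonneg[OF P] ij by auto
  \<comment> \<open>the test vectors \<open>e\<^sub>i + c e\<^sub>j\<close> with \<open>c = \<plusminus>1, \<plusminus>\<i>\<close> bound \<open>\<plusminus>Re\<close> and \<open>\<plusminus>Im\<close> of the entry\<close>
  have q1: "Re (Y $$ (i,i)) + Re (Y $$ (j,j)) + Re (Y $$ (i,j)) + Re (Y $$ (j,i)) \<ge> 0"
    using q[of 1] di dj by simp
  have q2: "Re (Y $$ (i,i)) + Re (Y $$ (j,j)) - Re (Y $$ (i,j)) - Re (Y $$ (j,i)) \<ge> 0"
    using q[of "-1"] di dj by simp
  have q3: "Re (Y $$ (i,j)) - Re (Y $$ (j,i)) = 0"
    "Re (Y $$ (i,i)) + Re (Y $$ (j,j)) - Im (Y $$ (i,j)) + Im (Y $$ (j,i)) \<ge> 0"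
    using q[of \<i>] di dj by simp_all
  have q4: "Im (Y $$ (i,j)) + Im (Y $$ (j,i)) = 0"
    "Re (Y $$ (i,i)) + Re (Y $$ (j,j)) + Im (Y $$ (i,j)) - Im (Y $$ (j,i)) \<ge> 0"
    using q[of 1] q[of "-\<i>"] di dj by simp_all
  have "cmod (Y $$ (i,j)) \<le> \<bar>Re (Y $$ (i,j))\<bar> + \<bar>Im (Y $$ (i,j))\<bar>" by (rule cmod_le)
  then show ?thesis using q1 q2 q3 q4 by linarith
qed

lemma psd_entry_bound:
  assumes P: "psd n Y" and ij: "i < n" "j < n"
  shows "cmod (Y $$ (i,j)) \<le> Re (mtrace Y)"
proof -
  have Y: "Y \<in> carrier_mat n n" using P psd_carrier by auto
  have tr: "Re (mtrace Y) = (\<Sum>k<n. Re (Y $$ (k,k)))" using Y unfolding mtrace_def by (simp add: Re_sum)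
  have nn: "\<forall>k\<in>{..<n}. 0 \<le> Re (Y $$ (k,k))" using psd_diag_nonneg[OF P] by auto
  show ?thesis
  proof (cases "i = j")
    case True
    have "cmod (Y $$ (i,i)) = Re (Y $$ (i,i))" using psd_diag_nonneg[OF P ij(1)]
      by (simp add: cmod_eq_Re)
    also have "\<dots> \<le> (\<Sum>k<n. Re (Y $$ (k,k)))" using ij nn by (intro member_le_sum) auto
    finally show ?thesis using tr True by simp
  next
    case False
    have "cmod (Y $$ (i,j)) \<le> Re (Y $$ (i,i)) + Re (Y $$ (j,j))" by (rule psd_offdiag_bound[OF P ij False])
    also have "\<dots> = (\<Sum>k\<in>{i,j}. Re (Y $$ (k,k)))" using False by simp
    also have "\<dots> \<le> (\<Sum>k<n. Re (Y $$ (k,k)))" using ij nn by (intro sum_mono2) auto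
    finally show ?thesis using tr by simp
  qed
qed

definition outer :: "nat \<Rightarrow> (nat \<Rightarrow> complex) \<Rightarrow> complex mat" where
  "outer n x = mat n n (\<lambda>(k,l). x k * cnj (x l))"

lemma psd_outer: "psd n (outer n x)"
  unfolding psd_iff_qform
proof (rule conjI, simp add: outer_def, rule ballI)
  fix v :: "complex vec" assume v: "v \<in> carrier_vec n"
  define z where "z = (\<Sum>l<n. cnj (x l) * v $ l)"
  have "qform n (outer n x) v = (\<Sum>k<n. \<Sum>l<n. (cnj (v $ k) * x k) * (cnj (x l) * v $ l))"
    using v by (subst qform_eq_double_sum) (auto simp: outer_def algebra_simps intro!: sum.cong)
  also have "\<dots> = cnj z * z"
    unfolding z_def by (simp add: sum_product mult.commute)
  finally show "Im (qform n (outer n x) v) = 0 \<and> 0 \<le> Re (qform n (outer n x) v)"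
    by (simp add: complex_mult_cnj mult.commute)
qed

lemma mtrace_outer: "mtrace (outer n x) = (\<Sum>k<n. x k * cnj (x k))"
  unfolding mtrace_def outer_def by simp

definition kron_delta :: "nat \<Rightarrow> nat \<Rightarrow> complex" where
  "kron_delta a k = (if k = a then 1 else 0)"

lemma mtrace_outer_delta: "a < n \<Longrightarrow> mtrace (outer n (kron_delta a)) = 1"
  unfolding mtrace_outer kron_delta_def by (simp add: if_distrib cong: if_cong)

lemma mtrace_outer_two_deltas:
  assumes "a < n" "b < n" "a \<noteq> b" "cmod c = 1"
  shows "mtrace (outer n (\<lambda>k. kron_delta a k + c * kron_delta b k)) = 2"
proof -
  have "mtrace (outer n (\<lambda>k. kron_delta a k + c * kron_delta b k))
      = (\<Sum>k<n. (if k = a then 1 else 0) + (if k = b then c * cnj c else 0))"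
    unfolding mtrace_outer kron_delta_def using assms by (intro sum.cong) auto
  also have "\<dots> = 1 + c * cnj c" using assms by (simp add: sum.distrib)
  also have "c * cnj c = 1" using assms(4) by (simp add: complex_mult_cnj cmod_def)
  finally show ?thesis by simp
qed

definition positive_map :: "nat \<Rightarrow> (complex mat \<Rightarrow> complex mat) \<Rightarrow> bool" where
  "positive_map d \<psi> \<longleftrightarrow> (\<forall>A. psd d A \<longrightarrow> psd d (\<psi> A))"

lemma linear_on_mat_carrier:
  "linear_on_mat d \<psi> \<Longrightarrow> A \<in> carrier_mat d d \<Longrightarrow> \<psi> A \<in> carrier_mat d d"
  unfolding linear_on_mat_def by blast

lemma tensor_id_1:
  assumes "\<forall>A \<in> carrier_mat d d. \<psi> A \<in> carrier_mat d d" "A \<in> carrier_mat d d"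
  shows "tensor_id d 1 \<psi> A = \<psi> A"
proof -
  have "blk d 1 A 0 0 = A" using assms(2) by (intro eq_matI) (auto simp: blk_def)
  then show ?thesis using assms by (intro eq_matI) (auto simp: tensor_id_def)
qed

lemma quantum_channel_positive_map:
  assumes "quantum_channel d \<phi>" shows "positive_map d \<phi>"
  unfolding positive_map_def
proof (intro allI impI)
  fix A assume A: "psd d A"
  have car: "\<forall>A \<in> carrier_mat d d. \<phi> A \<in> carrier_mat d d"
    using assms unfolding quantum_channel_def linear_on_mat_def by blast
  have "psd (d*1) (tensor_id d 1 \<phi> A)"
    using assms A unfolding quantum_channel_def completely_positive_def by (metis mult_1_right)
  then show "psd d (\<phi> A)" using tensor_id_1[OF car psd_carrier[OF A]] by simp
qed

lemma linear_on_mat_funpow: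
  assumes "linear_on_mat d \<phi>" shows "linear_on_mat d (\<phi> ^^ n)"
proof (induction n)
  case 0
  show ?case by (simp add: linear_on_mat_def)
next
  case (Suc n)
  then show ?case using assms unfolding linear_on_mat_def by (simp add: smult_carrier_mat)
qed

lemma positive_map_funpow: "positive_map d \<phi> \<Longrightarrow> positive_map d (\<phi> ^^ n)"
  by (induction n) (simp_all add: positive_map_def)

lemma trace_preserving_funpow:
  assumes "linear_on_mat d \<phi>" "trace_preserving d \<phi>"
  shows "trace_preserving d (\<phi> ^^ n)"
proof (induction n)
  case 0
  show ?case by (simp add: trace_preserving_def)
next
  case (Suc n)
  then show ?case
    using assms linear_on_mat_carrier[OF linear_on_mat_funpow[OF assms(1)]]
    unfolding trace_preserving_def by simp
qed

lemma positive_map_entry_bound: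
  assumes "positive_map d \<psi>" "trace_preserving d \<psi>" "psd d X" "i < d" "j < d"
  shows "cmod (\<psi> X $$ (i,j)) \<le> Re (mtrace X)"
proof -
  have "psd d (\<psi> X)" using assms(1,3) unfolding positive_map_def by blast
  then have "cmod (\<psi> X $$ (i,j)) \<le> Re (mtrace (\<psi> X))" using assms(4,5) by (rule psd_entry_bound)
  also have "mtrace (\<psi> X) = mtrace X"
    using assms(2) psd_carrier[OF assms(3)] unfolding trace_preserving_def by blast
  finally show ?thesis .
qed

lemma positive_map_is_state:
  assumes "positive_map d \<psi>" "trace_preserving d \<psi>" "is_state d A"
  shows "is_state d (\<psi> A)"
proof -
  have "psd d A" "mtrace A = 1" using assms(3) unfolding is_state_def by blast+
  moreover have "mtrace (\<psi> A) = mtrace A"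
    using assms(2) psd_carrier[OF \<open>psd d A\<close>] unfolding trace_preserving_def by blast
  ultimately show ?thesis using assms(1) unfolding is_state_def positive_map_def by simp
qed

lemma linear_on_mat_sum:
  assumes lin: "linear_on_mat d \<psi>" and fin: "finite S" and M: "\<forall>x\<in>S. M x \<in> carrier_mat d d"
    and ij: "i < d" "j < d"
  shows "\<psi> (mat d d (\<lambda>p. \<Sum>x\<in>S. c x * M x $$ p)) $$ (i,j) = (\<Sum>x\<in>S. c x * \<psi> (M x) $$ (i,j))"
  using fin M
proof (induction S rule: finite_induct)
  case empty
  have "mat d d (\<lambda>p. \<Sum>x\<in>{}. c x * M x $$ p) = 0 \<cdot>\<^sub>m 0\<^sub>m d d"
    by (rule eq_matI) auto
  then have "\<psi> (mat d d (\<lambda>p. \<Sum>x\<in>{}. c x * M x $$ p)) = 0 \<cdot>\<^sub>m \<psi> (0\<^sub>m d d)"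
    using lin unfolding linear_on_mat_def by (metis zero_carrier_mat)
  then show ?case using linear_on_mat_carrier[OF lin zero_carrier_mat] ij by simp
next
  case (insert x S)
  let ?rest = "mat d d (\<lambda>p. \<Sum>y\<in>S. c y * M y $$ p)"
  have Mx: "M x \<in> carrier_mat d d" using insert by auto
  have split: "mat d d (\<lambda>p. \<Sum>y\<in>insert x S. c y * M y $$ p) = c x \<cdot>\<^sub>m M x + ?rest"
    using insert by (intro eq_matI) auto
  have "\<psi> (c x \<cdot>\<^sub>m M x + ?rest) = c x \<cdot>\<^sub>m \<psi> (M x) + \<psi> ?rest"
    using lin Mx unfolding linear_on_mat_def by auto
  moreover have "\<psi> (M x) \<in> carrier_mat d d" "\<psi> ?rest \<in> carrier_mat d d"
    using linear_on_mat_carrier[OF lin] Mx by auto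
  ultimately show ?case unfolding split using insert ij by simp
qed

definition mat_unit :: "nat \<Rightarrow> nat \<Rightarrow> nat \<Rightarrow> complex mat" where
  "mat_unit d a b = mat d d (\<lambda>(k,l). if k = a \<and> l = b then 1 else 0)"

lemma mat_unit_carrier: "mat_unit d a b \<in> carrier_mat d d"
  by (simp add: mat_unit_def)

lemma linear_on_mat_unit_expansion:
  assumes lin: "linear_on_mat d \<psi>" and A: "A \<in> carrier_mat d d" and ij: "i < d" "j < d"
  shows "\<psi> A $$ (i,j) = (\<Sum>x\<in>{..<d}\<times>{..<d}. A $$ x * \<psi> (mat_unit d (fst x) (snd x)) $$ (i,j))"
proof -
  have "A = mat d d (\<lambda>p. \<Sum>x\<in>{..<d}\<times>{..<d}. A $$ x * mat_unit d (fst x) (snd x) $$ p)"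
  proof (rule eq_matI)
    fix k l assume "k < dim_row (mat d d (\<lambda>p. \<Sum>x\<in>{..<d}\<times>{..<d}. A $$ x * mat_unit d (fst x) (snd x) $$ p))"
       "l < dim_col (mat d d (\<lambda>p. \<Sum>x\<in>{..<d}\<times>{..<d}. A $$ x * mat_unit d (fst x) (snd x) $$ p))"
    then have kl: "k < d" "l < d" by auto
    have "(\<Sum>x\<in>{..<d}\<times>{..<d}. A $$ x * mat_unit d (fst x) (snd x) $$ (k,l))
        = (\<Sum>x\<in>{..<d}\<times>{..<d}. if x = (k,l) then A $$ (k,l) else 0)"
      using kl by (intro sum.cong) (auto simp: mat_unit_def)
    then show "A $$ (k,l) = mat d d (\<lambda>p. \<Sum>x\<in>{..<d}\<times>{..<d}. A $$ x * mat_unit d (fst x) (snd x) $$ p) $$ (k,l)"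
      using kl by (simp add: sum.delta')
  qed (use A in auto)
  then have "\<psi> A $$ (i,j) = \<psi> (mat d d (\<lambda>p. \<Sum>x\<in>{..<d}\<times>{..<d}. A $$ x * mat_unit d (fst x) (snd x) $$ p)) $$ (i,j)"
    by simp
  also have "\<dots> = (\<Sum>x\<in>{..<d}\<times>{..<d}. A $$ x * \<psi> (mat_unit d (fst x) (snd x)) $$ (i,j))"
    by (rule linear_on_mat_sum[OF lin _ _ ij]) (auto simp: mat_unit_carrier)
  finally show ?thesis .
qed

lemma positive_map_mat_unit_bound:
  assumes L: "linear_on_mat d \<psi>" and P: "positive_map d \<psi>" and T: "trace_preserving d \<psi>"
    and ab: "a < d" "b < d" and ij: "i < d" "j < d"
  shows "cmod (\<psi> (mat_unit d a b) $$ (i,j)) \<le> 8"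
proof (cases "a = b")
  case True
  have "mat_unit d a b = outer d (kron_delta a)"
    using True by (intro eq_matI) (auto simp: mat_unit_def outer_def kron_delta_def)
  moreover have "cmod (\<psi> (outer d (kron_delta a)) $$ (i,j)) \<le> 1"
    using positive_map_entry_bound[OF P T psd_outer[of d "kron_delta a"] ij] mtrace_outer_delta[OF ab(1)] by simp
  ultimately show ?thesis by simp
next
  case False
  \<comment> \<open>polarization: \<open>mat_unit d a b\<close> is a combination of four rank-one matrices of trace at most 2\<close>
  define M where "M t = (if t = (0::nat) then outer d (\<lambda>k. kron_delta a k + 1 * kron_delta b k)
     else if t = 1 then outer d (\<lambda>k. kron_delta a k + \<i> * kron_delta b k)
     else if t = 2 then outer d (kron_delta a) else outer d (kron_delta b))" for t
  define c where "c t = (if t = (0::nat) then 1/2 else if t = 1 then \<i>/2 else -(1+\<i>)/2)" for t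
  have Mt: "psd d (M t) \<and> Re (mtrace (M t)) \<le> 2" for t
    unfolding M_def using mtrace_outer_two_deltas[OF ab False, of 1] mtrace_outer_two_deltas[OF ab False, of \<i>]
      mtrace_outer_delta[OF ab(1)] mtrace_outer_delta[OF ab(2)]
    by (auto simp: psd_outer)
  have ct: "cmod (c t) \<le> 1" for t
  proof -
    have "cmod (1 + \<i>) \<le> 2" using norm_triangle_ineq[of 1 \<i>] by simp
    moreover have "- 1 - \<i> = - (1 + \<i>)" by simp
    then have "cmod (- 1 - \<i>) = cmod (1 + \<i>)" by (simp only: norm_minus_cancel)
    ultimately show ?thesis unfolding c_def by (auto simp: norm_divide)
  qed
  have "mat_unit d a b = mat d d (\<lambda>p. \<Sum>t\<in>{0,1,2,3}. c t * M t $$ p)"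
  proof (rule eq_matI)
    fix k l assume "k < dim_row (mat d d (\<lambda>p. \<Sum>t\<in>{0,1,2,3}. c t * M t $$ p))"
      "l < dim_col (mat d d (\<lambda>p. \<Sum>t\<in>{0,1,2,3}. c t * M t $$ p))"
    then show "mat_unit d a b $$ (k,l) = mat d d (\<lambda>p. \<Sum>t\<in>{0,1,2,3}. c t * M t $$ p) $$ (k,l)"
      using False by (auto simp: mat_unit_def M_def c_def outer_def kron_delta_def field_simps)
  qed (auto simp: mat_unit_def)
  moreover have "\<psi> (mat d d (\<lambda>p. \<Sum>t\<in>{0,1,2,3}. c t * M t $$ p)) $$ (i,j) = (\<Sum>t\<in>{0,1,2,3}. c t * \<psi> (M t) $$ (i,j))"
    by (rule linear_on_mat_sum[OF L _ _ ij]) (use Mt psd_carrier in auto)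
  ultimately have "\<psi> (mat_unit d a b) $$ (i,j) = (\<Sum>t\<in>{0,1,2,3}. c t * \<psi> (M t) $$ (i,j))"
    by simp
  then have "cmod (\<psi> (mat_unit d a b) $$ (i,j)) \<le> (\<Sum>t\<in>{0,1,2,3::nat}. cmod (c t * \<psi> (M t) $$ (i,j)))"
    by (simp only: norm_sum)
  also have "\<dots> \<le> (\<Sum>t\<in>{0,1,2,3::nat}. 2)"
  proof (rule sum_mono)
    fix t :: nat
    have "cmod (\<psi> (M t) $$ (i,j)) \<le> 2"
      using positive_map_entry_bound[OF P T _ ij, of "M t"] Mt[of t] by auto
    then show "cmod (c t * \<psi> (M t) $$ (i,j)) \<le> 2"
      using ct[of t] mult_mono[of "cmod (c t)" 1 _ 2] by (simp add: norm_mult)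
  qed
  finally show ?thesis by simp
qed

lemma finite_bounded_seqs_common_convergent_subseq:
  fixes f :: "'i \<Rightarrow> nat \<Rightarrow> 'a::heine_borel"
  assumes "finite S" "\<forall>x\<in>S. bounded (range (f x))"
  shows "\<exists>h. strict_mono h \<and> (\<forall>x\<in>S. convergent (\<lambda>k. f x (h k)))"
  using assms
proof (induction S rule: finite_induct)
  case empty
  show ?case by (rule exI[of _ id]) (simp add: strict_mono_def)
next
  case (insert x S)
  then obtain h where h: "strict_mono h" "\<forall>y\<in>S. convergent (\<lambda>k. f y (h k))" by auto
  have "bounded (range (f x))" using insert.prems by simp
  then have "bounded (range (\<lambda>k. f x (h k)))" by (rule bounded_subset) auto
  from bounded_imp_convergent_subsequence[OF this]
  obtain l r where r: "strict_mono r" "((\<lambda>k. f x (h k)) \<circ> r) \<longlonglongrightarrow> l"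
    by (elim exE conjE)
  have "convergent (\<lambda>k. f y ((h \<circ> r) k))" if "y \<in> insert x S" for y
  proof (cases "y = x")
    case True
    then show ?thesis using r unfolding convergent_def by (auto simp: o_def)
  next
    case False
    with that h obtain L where "(\<lambda>k. f y (h k)) \<longlonglongrightarrow> L" unfolding convergent_def by auto
    from LIMSEQ_subseq_LIMSEQ[OF this r(1)] show ?thesis unfolding convergent_def by (auto simp: o_def)
  qed
  moreover have "strict_mono (h \<circ> r)" using h r by (simp add: strict_mono_o)
  ultimately show ?case by blast
qed

lemma finite_bounded_complex_seqs_common_convergent_subseq:
  fixes f :: "'i \<Rightarrow> nat \<Rightarrow> complex"
  assumes "finite S" "\<forall>x\<in>S. \<exists>B. \<forall>n. cmod (f x n) \<le> B"
  shows "\<exists>h. strict_mono h \<and> (\<forall>x\<in>S. convergent (\<lambda>k. f x (h k)))"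
proof -
  define g where "g p n = (if snd p then Re (f (fst p) n) else Im (f (fst p) n))" for p n
  have "bounded (range (g p))" if p: "p \<in> S \<times> UNIV" for p
  proof -
    obtain B where B: "\<forall>n. cmod (f (fst p) n) \<le> B" using assms(2) p by auto
    have "norm (g p n) \<le> B" for n
      using B[rule_format, of n] abs_Re_le_cmod[of "f (fst p) n"] abs_Im_le_cmod[of "f (fst p) n"]
      unfolding g_def by auto
    then show ?thesis unfolding bounded_iff by blast
  qed
  then obtain h where h: "strict_mono h" and conv: "\<forall>p\<in>S \<times> UNIV. convergent (\<lambda>k. g p (h k))"
    using finite_bounded_seqs_common_convergent_subseq[of "S \<times> UNIV" g] assms(1) by auto
  have "convergent (\<lambda>k. f x (h k))" if x: "x \<in> S" for x
  proof -
    obtain a b where "(\<lambda>k. g (x, True) (h k)) \<longlonglongrightarrow> a" "(\<lambda>k. g (x, False) (h k)) \<longlonglongrightarrow> b"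
      using conv x unfolding convergent_def by blast
    then have "(\<lambda>k. f x (h k)) \<longlonglongrightarrow> Complex a b" unfolding tendsto_complex_iff by (simp add: g_def)
    then show ?thesis unfolding convergent_def by blast
  qed
  with h show ?thesis by blast
qed

definition converges_entrywise ::
    "nat \<Rightarrow> (nat \<Rightarrow> complex mat \<Rightarrow> complex mat) \<Rightarrow> (complex mat \<Rightarrow> complex mat) \<Rightarrow> bool" where
  "converges_entrywise d F \<psi> \<longleftrightarrow>
     (\<forall>A\<in>carrier_mat d d. \<forall>i<d. \<forall>j<d. (\<lambda>k. F k A $$ (i,j)) \<longlonglongrightarrow> \<psi> A $$ (i,j))"

lemma limit_point_of_powers_iff:
  "limit_point_of_powers d \<phi> \<psi> \<longleftrightarrow> (\<forall>A\<in>carrier_mat d d. \<psi> A \<in> carrier_mat d d) \<and>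
     (\<exists>r. strict_mono r \<and> converges_entrywise d (\<lambda>k. \<phi> ^^ r k) \<psi>)"
  unfolding limit_point_of_powers_def converges_entrywise_def ..

lemma converges_entrywise_subseq:
  assumes "converges_entrywise d F \<psi>" "strict_mono h"
  shows "converges_entrywise d (\<lambda>k. F (h k)) \<psi>"
  unfolding converges_entrywise_def
proof (intro ballI allI impI)
  fix A :: "complex mat" and i j assume "A \<in> carrier_mat d d" "i < d" "j < d"
  then have "(\<lambda>k. F k A $$ (i,j)) \<longlonglongrightarrow> \<psi> A $$ (i,j)"
    using assms(1) unfolding converges_entrywise_def by blast
  from LIMSEQ_subseq_LIMSEQ[OF this assms(2)]
  show "(\<lambda>k. F (h k) A $$ (i,j)) \<longlonglongrightarrow> \<psi> A $$ (i,j)" by (simp add: o_def)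
qed

lemma converges_entrywise_unique:
  assumes "converges_entrywise d F \<psi>" "converges_entrywise d F \<psi>'" "A \<in> carrier_mat d d"
    and "\<psi> A \<in> carrier_mat d d" "\<psi>' A \<in> carrier_mat d d"
  shows "\<psi> A = \<psi>' A"
proof (rule eq_matI)
  fix i j assume "i < dim_row (\<psi>' A)" "j < dim_col (\<psi>' A)"
  then have "i < d" "j < d" using assms(5) by auto
  then have "(\<lambda>k. F k A $$ (i,j)) \<longlonglongrightarrow> \<psi> A $$ (i,j)" "(\<lambda>k. F k A $$ (i,j)) \<longlonglongrightarrow> \<psi>' A $$ (i,j)"
    using assms(1-3) unfolding converges_entrywise_def by blast+
  then show "\<psi> A $$ (i,j) = \<psi>' A $$ (i,j)" by (rule LIMSEQ_unique)
qed (use assms(4,5) in auto)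

lemma converges_entrywise_linear:
  assumes F: "\<forall>k. linear_on_mat d (F k)" and conv: "converges_entrywise d F \<chi>"
    and car: "\<forall>A\<in>carrier_mat d d. \<chi> A \<in> carrier_mat d d"
  shows "linear_on_mat d \<chi>"
proof -
  have lim: "(\<lambda>k. F k A $$ (i,j)) \<longlonglongrightarrow> \<chi> A $$ (i,j)" if "A \<in> carrier_mat d d" "i < d" "j < d" for A :: "complex mat" and i j
    using conv that unfolding converges_entrywise_def by blast
  have Fk: "F k A \<in> carrier_mat d d" if "A \<in> carrier_mat d d" for k and A :: "complex mat"
    using linear_on_mat_carrier F that by blast
  have "\<chi> (A + B) = \<chi> A + \<chi> B" if A: "A \<in> carrier_mat d d" and B: "B \<in> carrier_mat d d" for A B :: "complex mat"
  proof (rule eq_matI)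
    fix i j assume "i < dim_row (\<chi> A + \<chi> B)" "j < dim_col (\<chi> A + \<chi> B)"
    then have ij: "i < d" "j < d" using A B car by auto
    have "F k (A + B) = F k A + F k B" for k using F A B unfolding linear_on_mat_def by blast
    moreover have "(F k A + F k B) $$ (i,j) = F k A $$ (i,j) + F k B $$ (i,j)" for k
      using Fk[OF B, of k] ij by auto
    ultimately have "(\<lambda>k. F k (A + B) $$ (i,j)) = (\<lambda>k. F k A $$ (i,j) + F k B $$ (i,j))"
      by simp
    then have "(\<lambda>k. F k (A + B) $$ (i,j)) \<longlonglongrightarrow> \<chi> A $$ (i,j) + \<chi> B $$ (i,j)"
      using lim[OF A ij] lim[OF B ij] by (simp add: tendsto_add)
    then have "\<chi> (A + B) $$ (i,j) = \<chi> A $$ (i,j) + \<chi> B $$ (i,j)"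
      by (rule LIMSEQ_unique[OF lim[OF add_carrier_mat[OF B] ij]])
    then show "\<chi> (A + B) $$ (i,j) = (\<chi> A + \<chi> B) $$ (i,j)"
      using carrier_matD[OF car[rule_format, OF B]] ij by simp
  qed (use car[rule_format, OF B] car[rule_format, OF add_carrier_mat[OF B, of A]] in auto)
  moreover have "\<chi> (c \<cdot>\<^sub>m A) = c \<cdot>\<^sub>m \<chi> A" if A: "A \<in> carrier_mat d d" for A :: "complex mat" and c
  proof (rule eq_matI)
    fix i j assume "i < dim_row (c \<cdot>\<^sub>m \<chi> A)" "j < dim_col (c \<cdot>\<^sub>m \<chi> A)"
    then have ij: "i < d" "j < d" using A car by auto
    have "F k (c \<cdot>\<^sub>m A) = c \<cdot>\<^sub>m F k A" for k using F A unfolding linear_on_mat_def by blast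
    moreover have "(c \<cdot>\<^sub>m F k A) $$ (i,j) = c * F k A $$ (i,j)" for k
      using Fk[OF A, of k] ij by auto
    ultimately have "(\<lambda>k. F k (c \<cdot>\<^sub>m A) $$ (i,j)) = (\<lambda>k. c * F k A $$ (i,j))"
      by simp
    then have "(\<lambda>k. F k (c \<cdot>\<^sub>m A) $$ (i,j)) \<longlonglongrightarrow> c * \<chi> A $$ (i,j)"
      using lim[OF A ij] by (simp add: tendsto_mult_left)
    then have "\<chi> (c \<cdot>\<^sub>m A) $$ (i,j) = c * \<chi> A $$ (i,j)"
      by (rule LIMSEQ_unique[OF lim[OF smult_carrier_mat[OF A] ij]])
    then show "\<chi> (c \<cdot>\<^sub>m A) $$ (i,j) = (c \<cdot>\<^sub>m \<chi> A) $$ (i,j)"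
      using carrier_matD[OF car[rule_format, OF A]] ij by simp
  qed (use car[rule_format, OF A] car[rule_format, OF smult_carrier_mat[OF A, of c]] in auto)
  ultimately show ?thesis using car unfolding linear_on_mat_def by blast
qed

lemma is_state_entrywise_limit:
  assumes S: "\<forall>k. is_state d (Y k)" and Z: "Z \<in> carrier_mat d d"
    and lim: "\<forall>i<d. \<forall>j<d. (\<lambda>k. Y k $$ (i,j)) \<longlonglongrightarrow> Z $$ (i,j)"
  shows "is_state d Z"
proof -
  have Y: "Y k \<in> carrier_mat d d" for k using S unfolding is_state_def psd_def by auto
  have "psd d Z" unfolding psd_iff_qform
  proof (rule conjI[OF Z], rule ballI)
    fix v :: "complex vec" assume v: "v \<in> carrier_vec d"
    have "(\<lambda>k. \<Sum>a<d. \<Sum>b<d. cnj (v $ a) * Y k $$ (a,b) * v $ b) \<longlonglongrightarrow> (\<Sum>a<d. \<Sum>b<d. cnj (v $ a) * Z $$ (a,b) * v $ b)"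
      using lim by (intro tendsto_sum tendsto_mult tendsto_const) auto
    then have q: "(\<lambda>k. qform d (Y k) v) \<longlonglongrightarrow> qform d Z v"
      using qform_eq_double_sum[OF Y v] qform_eq_double_sum[OF Z v] by simp
    have yk: "Im (qform d (Y k) v) = 0 \<and> Re (qform d (Y k) v) \<ge> 0" for k
      using S v unfolding is_state_def psd_iff_qform by blast
    have "(\<lambda>k. Im (qform d (Y k) v)) \<longlonglongrightarrow> Im (qform d Z v)" using q by (rule tendsto_Im)
    moreover have "(\<lambda>k. Im (qform d (Y k) v)) \<longlonglongrightarrow> 0" using yk by simp
    ultimately have im: "Im (qform d Z v) = 0" by (rule LIMSEQ_unique)
    have "(\<lambda>k. Re (qform d (Y k) v)) \<longlonglongrightarrow> Re (qform d Z v)" using q by (rule tendsto_Re)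
    then have re: "Re (qform d Z v) \<ge> 0" using yk by (intro LIMSEQ_le_const) auto
    show "Im (qform d Z v) = 0 \<and> Re (qform d Z v) \<ge> 0" using im re by simp
  qed
  moreover have "mtrace Z = 1"
  proof -
    have "mtrace (Y k) = (\<Sum>i<d. Y k $$ (i,i))" for k using Y[of k] by (simp add: mtrace_def)
    moreover have "(\<lambda>k. \<Sum>i<d. Y k $$ (i,i)) \<longlonglongrightarrow> mtrace Z"
      using lim Z unfolding mtrace_def by (auto intro!: tendsto_sum)
    ultimately have "(\<lambda>k. mtrace (Y k)) \<longlonglongrightarrow> mtrace Z" by simp
    moreover have "(\<lambda>k. mtrace (Y k)) \<longlonglongrightarrow> 1" using S unfolding is_state_def by simp
    ultimately show ?thesis by (rule LIMSEQ_unique)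
  qed
  ultimately show ?thesis unfolding is_state_def by simp
qed

lemma converges_entrywise_is_state:
  assumes "\<forall>k A. is_state d A \<longrightarrow> is_state d (F k A)" "converges_entrywise d F \<chi>"
    and "\<forall>A\<in>carrier_mat d d. \<chi> A \<in> carrier_mat d d" "is_state d A"
  shows "is_state d (\<chi> A)"
proof (rule is_state_entrywise_limit[where Y = "\<lambda>k. F k A"])
  show "\<chi> A \<in> carrier_mat d d" using assms(3,4) psd_carrier unfolding is_state_def by blast
  show "\<forall>i<d. \<forall>j<d. (\<lambda>k. F k A $$ (i,j)) \<longlonglongrightarrow> \<chi> A $$ (i,j)"
    using assms(2,4) psd_carrier unfolding converges_entrywise_def is_state_def by blast
qed (use assms(1,4) in blast)

lemma positive_maps_convergent_subseq:
  fixes F :: "nat \<Rightarrow> complex mat \<Rightarrow> complex mat"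
  assumes L: "\<forall>n. linear_on_mat d (F n)" and P: "\<forall>n. positive_map d (F n)"
    and T: "\<forall>n. trace_preserving d (F n)"
  obtains h \<chi> where "strict_mono h" "converges_entrywise d (\<lambda>k. F (h k)) \<chi>"
    "\<forall>A\<in>carrier_mat d d. \<chi> A \<in> carrier_mat d d"
proof -
  define U where "U = {..<d}\<times>{..<d}"
  define f where "f x n = F n (mat_unit d (fst (fst x)) (snd (fst x))) $$ snd x" for x :: "(nat \<times> nat) \<times> nat \<times> nat" and n :: nat
  have "\<forall>x\<in>U \<times> U. \<exists>B. \<forall>n. cmod (f x n) \<le> B"
    using positive_map_mat_unit_bound[OF L[rule_format] P[rule_format] T[rule_format]]
    unfolding U_def f_def by fastforce
  then obtain h where h: "strict_mono h" and conv: "\<forall>x\<in>U \<times> U. convergent (\<lambda>k. f x (h k))"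
    using finite_bounded_complex_seqs_common_convergent_subseq[of "U \<times> U" f] unfolding U_def by auto
  \<comment> \<open>the limit is assembled by linearity from the limits on the matrix units\<close>
  define \<chi> where "\<chi> A = mat d d (\<lambda>q. \<Sum>x\<in>U. A $$ x * lim (\<lambda>k. f (x, q) (h k)))" for A
  have "converges_entrywise d (\<lambda>k. F (h k)) \<chi>"
    unfolding converges_entrywise_def
  proof (intro ballI allI impI)
    fix A :: "complex mat" and i j assume A: "A \<in> carrier_mat d d" and ij: "i < d" "j < d"
    have "(\<lambda>k. \<Sum>x\<in>U. A $$ x * f (x, (i,j)) (h k)) \<longlonglongrightarrow> (\<Sum>x\<in>U. A $$ x * lim (\<lambda>k. f (x, (i,j)) (h k)))"
      using conv ij unfolding U_def by (intro tendsto_sum tendsto_mult_left) (auto simp: convergent_LIMSEQ_iff)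
    then show "(\<lambda>k. F (h k) A $$ (i,j)) \<longlonglongrightarrow> \<chi> A $$ (i,j)"
      using linear_on_mat_unit_expansion[OF L[rule_format] A ij] ij by (simp add: \<chi>_def f_def U_def)
  qed
  moreover have "\<forall>A\<in>carrier_mat d d. \<chi> A \<in> carrier_mat d d" by (simp add: \<chi>_def)
  ultimately show ?thesis using h that by blast
qed

lemma converges_entrywise_comp:
  assumes F: "\<forall>k. linear_on_mat d (F k)" and \<chi>: "linear_on_mat d \<chi>"
    and F\<chi>: "converges_entrywise d F \<chi>" and G\<psi>: "converges_entrywise d G \<psi>"
    and G: "\<forall>k. \<forall>A\<in>carrier_mat d d. G k A \<in> carrier_mat d d"
    and \<psi>: "\<forall>A\<in>carrier_mat d d. \<psi> A \<in> carrier_mat d d"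
  shows "converges_entrywise d (\<lambda>k. F k \<circ> G k) (\<chi> \<circ> \<psi>)"
  unfolding converges_entrywise_def
proof (intro ballI allI impI)
  fix A :: "complex mat" and i j assume A: "A \<in> carrier_mat d d" and ij: "i < d" "j < d"
  have "(\<lambda>k. \<Sum>x\<in>{..<d}\<times>{..<d}. G k A $$ x * F k (mat_unit d (fst x) (snd x)) $$ (i,j))
      \<longlonglongrightarrow> (\<Sum>x\<in>{..<d}\<times>{..<d}. \<psi> A $$ x * \<chi> (mat_unit d (fst x) (snd x)) $$ (i,j))"
    using F\<chi> G\<psi> A ij mat_unit_carrier unfolding converges_entrywise_def
    by (intro tendsto_sum tendsto_mult) auto
  then show "(\<lambda>k. (F k \<circ> G k) A $$ (i,j)) \<longlonglongrightarrow> (\<chi> \<circ> \<psi>) A $$ (i,j)"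
    using linear_on_mat_unit_expansion[OF F[rule_format] G[rule_format, OF A] ij]
      linear_on_mat_unit_expansion[OF \<chi> \<psi>[rule_format, OF A] ij] by simp
qed

lemma limit_points_of_powers_factor:
  assumes ch: "quantum_channel d \<phi>" and lp: "limit_point_of_powers d \<phi> \<psi>"
    and lp': "limit_point_of_powers d \<phi> \<psi>'"
  obtains \<chi> where "linear_on_mat d \<chi>" "\<forall>A. is_state d A \<longrightarrow> is_state d (\<chi> A)"
    "\<forall>A\<in>carrier_mat d d. \<psi>' A = \<chi> (\<psi> A)"
proof -
  have L0: "linear_on_mat d \<phi>" and T0: "trace_preserving d \<phi>"
    using ch unfolding quantum_channel_def by blast+
  note L = linear_on_mat_funpow[OF L0]
  note P = positive_map_funpow[OF quantum_channel_positive_map[OF ch]]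
  note T = trace_preserving_funpow[OF L0 T0]
  from lp obtain r where r: "strict_mono r" "converges_entrywise d (\<lambda>k. \<phi> ^^ r k) \<psi>"
    and \<psi>: "\<forall>A\<in>carrier_mat d d. \<psi> A \<in> carrier_mat d d"
    unfolding limit_point_of_powers_iff by (elim conjE exE)
  from lp' obtain s where s: "strict_mono s" "converges_entrywise d (\<lambda>k. \<phi> ^^ s k) \<psi>'"
    and \<psi>': "\<forall>A\<in>carrier_mat d d. \<psi>' A \<in> carrier_mat d d"
    unfolding limit_point_of_powers_iff by (elim conjE exE)
  define N where "N k = s (r k + k) - r k" for k
  have "\<forall>n. linear_on_mat d (\<phi> ^^ N n)" "\<forall>n. positive_map d (\<phi> ^^ N n)"
    "\<forall>n. trace_preserving d (\<phi> ^^ N n)"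
    using L P T by blast+
  then obtain h \<chi> where h: "strict_mono h" and N\<chi>: "converges_entrywise d (\<lambda>k. \<phi> ^^ N (h k)) \<chi>"
    and \<chi>: "\<forall>A\<in>carrier_mat d d. \<chi> A \<in> carrier_mat d d"
    by (rule positive_maps_convergent_subseq)
  have lin\<chi>: "linear_on_mat d \<chi>" using converges_entrywise_linear[OF _ N\<chi> \<chi>] L by blast
  have "\<forall>k. \<forall>A\<in>carrier_mat d d. (\<phi> ^^ r (h k)) A \<in> carrier_mat d d"
    using linear_on_mat_carrier[OF L] by blast
  then have lim_comp: "converges_entrywise d (\<lambda>k. (\<phi> ^^ N (h k)) \<circ> (\<phi> ^^ r (h k))) (\<chi> \<circ> \<psi>)"
    using converges_entrywise_comp[OF _ lin\<chi> N\<chi> converges_entrywise_subseq[OF r(2) h] _ \<psi>] L by blast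
  have "s (r (h k) + h k) = N (h k) + r (h k)" for k
    using seq_suble[OF s(1), of "r (h k) + h k"] by (simp add: N_def)
  then have "(\<lambda>k. (\<phi> ^^ N (h k)) \<circ> (\<phi> ^^ r (h k))) = (\<lambda>k. \<phi> ^^ s (r (h k) + h k))"
    by (simp add: funpow_add)
  moreover have "strict_mono (\<lambda>k. r (h k) + h k)"
    using r(1) h by (auto simp: strict_mono_def intro: add_strict_mono)
  then have "converges_entrywise d (\<lambda>k. \<phi> ^^ s (r (h k) + h k)) \<psi>'"
    by (rule converges_entrywise_subseq[OF s(2)])
  ultimately have lim_s: "converges_entrywise d (\<lambda>k. (\<phi> ^^ N (h k)) \<circ> (\<phi> ^^ r (h k))) \<psi>'"
    by simp
  have factor: "\<forall>A\<in>carrier_mat d d. \<psi>' A = \<chi> (\<psi> A)"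
    using converges_entrywise_unique[OF lim_s lim_comp] \<psi>' \<chi> \<psi> by simp
  have "\<forall>k A. is_state d A \<longrightarrow> is_state d ((\<phi> ^^ N (h k)) A)"
    using positive_map_is_state[OF P T] by blast
  then have "\<forall>A. is_state d A \<longrightarrow> is_state d (\<chi> A)"
    using converges_entrywise_is_state[OF _ N\<chi> \<chi>] by blast
  from lin\<chi> this factor show ?thesis by (rule that)
qed

lemma entanglement_breaking_cong:
  assumes "entanglement_breaking d \<psi>" "\<forall>A\<in>carrier_mat d d. \<psi> A = \<psi>' A"
  shows "entanglement_breaking d \<psi>'"
proof -
  have "tensor_id d m \<psi> \<rho> = tensor_id d m \<psi>' \<rho>" for m \<rho>
    using assms(2) unfolding tensor_id_def by (simp add: blk_def)
  then show ?thesis using assms(1) unfolding entanglement_breaking_def by simp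
qed

lemma index_split_bounds:
  fixes i d m :: nat assumes "i < d * m"
  shows "i div m < d" "i mod m < m"
proof -
  show "i div m < d" using assms by (simp add: less_mult_imp_div_less)
  have "0 < m" using assms by (cases m) auto
  then show "i mod m < m" by simp
qed

lemma index_join:
  fixes I a d m :: nat assumes "I < d" "a < m"
  shows "I * m + a < d * m" "(I * m + a) div m = I" "(I * m + a) mod m = a"
proof -
  have "I * m + a < (I + 1) * m" using assms by simp
  also have "\<dots> \<le> d * m" using assms by (intro mult_le_mono1) simp
  finally show "I * m + a < d * m" .
  show "(I * m + a) div m = I" "(I * m + a) mod m = a" using assms by auto
qed

lemma entanglement_breaking_comp:
  assumes EB: "entanglement_breaking d \<psi>" and L: "linear_on_mat d \<chi>"
    and S: "\<forall>A. is_state d A \<longrightarrow> is_state d (\<chi> A)"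
    and \<psi>: "\<forall>A\<in>carrier_mat d d. \<psi> A \<in> carrier_mat d d"
  shows "entanglement_breaking d (\<chi> \<circ> \<psi>)"
  unfolding entanglement_breaking_def
proof (intro allI impI)
  fix m \<rho> assume "is_state (d*m) \<rho>"
  then have "separable d m (tensor_id d m \<psi> \<rho>)" using EB unfolding entanglement_breaking_def by blast
  then obtain K :: nat and p A B where
    KA: "\<forall>k<K. p k \<ge> 0 \<and> is_state d (A k) \<and> is_state m (B k)" and ps: "(\<Sum>k<K. p k) = 1" and
    ent: "\<forall>i<d*m. \<forall>j<d*m. tensor_id d m \<psi> \<rho> $$ (i,j) =
            (\<Sum>k<K. complex_of_real (p k) * (A k $$ (i div m, j div m)) * (B k $$ (i mod m, j mod m)))"
    unfolding separable_def by (elim conjE exE) (rule that; assumption)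
  have Acar: "\<forall>k\<in>{..<K}. A k \<in> carrier_mat d d" using KA unfolding is_state_def psd_def by auto
  \<comment> \<open>each block of \<open>(\<psi> \<otimes> I) \<rho>\<close> is a combination of the \<open>A k\<close>, which \<open>\<chi>\<close> maps term by term\<close>
  have blk: "\<psi> (blk d m \<rho> a b) = mat d d (\<lambda>q. \<Sum>k\<in>{..<K}. (complex_of_real (p k) * B k $$ (a,b)) * A k $$ q)"
    if ab: "a < m" "b < m" for a b
  proof (rule eq_matI)
    fix I J assume "I < dim_row (mat d d (\<lambda>q. \<Sum>k\<in>{..<K}. (complex_of_real (p k) * B k $$ (a,b)) * A k $$ q))"
      "J < dim_col (mat d d (\<lambda>q. \<Sum>k\<in>{..<K}. (complex_of_real (p k) * B k $$ (a,b)) * A k $$ q))"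
    then have IJ: "I < d" "J < d" by auto
    have "\<psi> (blk d m \<rho> a b) $$ (I,J) = tensor_id d m \<psi> \<rho> $$ (I*m+a, J*m+b)"
      unfolding tensor_id_def using index_join[OF IJ(1) ab(1)] index_join[OF IJ(2) ab(2)] by simp
    also have "\<dots> = (\<Sum>k<K. complex_of_real (p k) * A k $$ (I,J) * B k $$ (a,b))"
      using ent index_join[OF IJ(1) ab(1)] index_join[OF IJ(2) ab(2)] by simp
    finally show "\<psi> (blk d m \<rho> a b) $$ (I,J) = mat d d (\<lambda>q. \<Sum>k\<in>{..<K}. (complex_of_real (p k) * B k $$ (a,b)) * A k $$ q) $$ (I,J)"
      using IJ by (simp add: algebra_simps)
  qed (use \<psi>[rule_format, of "blk d m \<rho> a b"] in \<open>auto simp: blk_def\<close>)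
  have entries: "tensor_id d m (\<chi> \<circ> \<psi>) \<rho> $$ (i,j) =
          (\<Sum>k<K. complex_of_real (p k) * (\<chi> (A k) $$ (i div m, j div m)) * (B k $$ (i mod m, j mod m)))"
    if ij: "i < d*m" "j < d*m" for i j
  proof -
    note fi = index_split_bounds[OF ij(1)] and fj = index_split_bounds[OF ij(2)]
    have "tensor_id d m (\<chi> \<circ> \<psi>) \<rho> $$ (i,j)
        = \<chi> (mat d d (\<lambda>q. \<Sum>k\<in>{..<K}. (complex_of_real (p k) * B k $$ (i mod m, j mod m)) * A k $$ q)) $$ (i div m, j div m)"
      using ij blk[OF fi(2) fj(2)] by (simp add: tensor_id_def)
    also have "\<dots> = (\<Sum>k\<in>{..<K}. (complex_of_real (p k) * B k $$ (i mod m, j mod m)) * \<chi> (A k) $$ (i div m, j div m))"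
      by (rule linear_on_mat_sum[OF L _ Acar fi(1) fj(1)]) simp
    finally show ?thesis by (simp add: algebra_simps)
  qed
  show "separable d m (tensor_id d m (\<chi> \<circ> \<psi>) \<rho>)"
    unfolding separable_def
  proof (intro conjI exI)
    show "tensor_id d m (\<chi> \<circ> \<psi>) \<rho> \<in> carrier_mat (d*m) (d*m)" by (simp add: tensor_id_def)
    show "\<forall>k<K. p k \<ge> 0 \<and> is_state d ((\<chi> \<circ> A) k) \<and> is_state m (B k)" using KA S by simp
    show "(\<Sum>k<K. p k) = 1" by (rule ps)
    show "\<forall>i<d*m. \<forall>j<d*m. tensor_id d m (\<chi> \<circ> \<psi>) \<rho> $$ (i,j) =
            (\<Sum>k<K. complex_of_real (p k) * ((\<chi> \<circ> A) k $$ (i div m, j div m)) * (B k $$ (i mod m, j mod m)))"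
      using entries by simp
  qed
qed

theorem mainTheorem14:
  fixes d :: nat and \<phi> :: "complex mat \<Rightarrow> complex mat"
  assumes "0 < d" and "quantum_channel d \<phi>"
  shows "(\<forall>\<psi>. limit_point_of_powers d \<phi> \<psi> \<longrightarrow> entanglement_breaking d \<psi>) \<or>
         (\<forall>\<psi>. limit_point_of_powers d \<phi> \<psi> \<longrightarrow> \<not> entanglement_breaking d \<psi>)"
proof -
  have "entanglement_breaking d \<psi>'"
    if lp: "limit_point_of_powers d \<phi> \<psi>" and lp': "limit_point_of_powers d \<phi> \<psi>'"
      and EB: "entanglement_breaking d \<psi>" for \<psi> \<psi>'
  proof -
    obtain \<chi> where \<chi>: "linear_on_mat d \<chi>" "\<forall>A. is_state d A \<longrightarrow> is_state d (\<chi> A)"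
      and factor: "\<forall>A\<in>carrier_mat d d. \<psi>' A = \<chi> (\<psi> A)"
      using limit_points_of_powers_factor[OF assms(2) lp lp'] by blast
    have "entanglement_breaking d (\<chi> \<circ> \<psi>)"
      using entanglement_breaking_comp[OF EB \<chi>] lp unfolding limit_point_of_powers_def by blast
    then show ?thesis by (rule entanglement_breaking_cong) (use factor in simp)
  qed
  then show ?thesis by blast
qed

end
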